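(* Let $g:\mathds{R}^d\setminus\{0\}\to[0,\infty)$ be continuous and let $(\mu_n)\subset K^g(\mathds{R}^d,\mathcal{M}^+(\mathds{R}^d\setminus\{0\}))$ converge boundedly and pointwise to $\mu:\mathds{R}^d\to\mathcal{M}^+(\mathds{R}^d\setminus\{0\})$. Then $\mu\in K^g(\mathds{R}^d,\mathcal{M}^+(\mathds{R}^d\setminus\{0\}))$.
   Context: $\mathcal{M}^+(\mathds{R}^d\setminus\{0\})$: positive locally finite measures on $\mathds{R}^d\setminus\{0\}$ with the vague topology. $K^g$: measurable maps $\mu:\mathds{R}^d\to\mathcal{M}^+(\mathds{R}^d\setminus\{0\})$ with $\|\mu\|_g:=\sup_x\int g(y)\mu(x,dy)<\infty$ and $\lim_{R\to\infty}\sup_{x\in K}\mu(x,\{|y|>R\})=0$ for every compact $K\subset\mathds{R}^d$. Bounded pointwise convergence $\mu_n\to\mu$: $\sup_n\|\mu_n\|_g<\infty$, $\mu_n(x)\to\mu(x)$ vaguely for every $x$, and $\lim_{R\to\infty}\sup_n\sup_{x\in K}\mu_n(x,\{|y|>R\})=0$ for every compact $K$. *)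

theory Defs
  imports "HOL-Analysis.Analysis"
begin

text \<open>A positive measure on R^d minus the origin is modelled as a Borel measure on
  the euclidean space 'a that puts no mass on the origin.\<close>

definition Mplus :: "'a::euclidean_space measure \<Rightarrow> bool" where
  "Mplus M \<longleftrightarrow> sets M = sets borel \<and> emeasure M {0} = 0 \<and>
     (\<forall>K. compact K \<and> K \<subseteq> - {0} \<longrightarrow> emeasure M K < \<infinity>)"

definition Cc0 :: "('a::euclidean_space \<Rightarrow> real) \<Rightarrow> bool" where
  "Cc0 f \<longleftrightarrow> continuous_on UNIV f \<and>
     (\<exists>K. compact K \<and> K \<subseteq> - {0} \<and> (\<forall>y. y \<notin> K \<longrightarrow> f y = 0))"

definition vague_conv :: "(nat \<Rightarrow> 'a::euclidean_space measure) \<Rightarrow> 'a measure \<Rightarrow> bool" where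
  "vague_conv Ms M \<longleftrightarrow>
     (\<forall>f. Cc0 f \<longrightarrow> (\<lambda>n. integral\<^sup>L (Ms n) f) \<longlonglongrightarrow> integral\<^sup>L M f)"

text \<open>Measurability of a kernel x -> mu(x) for the Borel sigma algebra of the vague
  topology, i.e. the sigma algebra generated by the maps nu -> integral of f over nu, f in C_c.\<close>

definition kernel_measurable :: "('a::euclidean_space \<Rightarrow> 'a measure) \<Rightarrow> bool" where
  "kernel_measurable \<mu> \<longleftrightarrow>
     (\<forall>f. Cc0 f \<longrightarrow> (\<lambda>x. integral\<^sup>L (\<mu> x) f) \<in> borel_measurable borel)"

definition gnorm :: "('a::euclidean_space \<Rightarrow> real) \<Rightarrow> ('a \<Rightarrow> 'a measure) \<Rightarrow> ennreal" where
  "gnorm g \<mu> = (SUP x. \<integral>\<^sup>+ y. ennreal (g y) \<partial>(\<mu> x))"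

definition tight_on_compacts :: "('a::euclidean_space \<Rightarrow> 'a measure) \<Rightarrow> bool" where
  "tight_on_compacts \<mu> \<longleftrightarrow>
     (\<forall>K. compact K \<longrightarrow>
        ((\<lambda>R::real. SUP x\<in>K. emeasure (\<mu> x) {y. norm y > R}) \<longlongrightarrow> 0) at_top)"

definition Kg :: "('a::euclidean_space \<Rightarrow> real) \<Rightarrow> ('a \<Rightarrow> 'a measure) set" where
  "Kg g = {\<mu>. (\<forall>x. Mplus (\<mu> x)) \<and> kernel_measurable \<mu> \<and> gnorm g \<mu> < \<infinity> \<and>
              tight_on_compacts \<mu>}"

definition bdd_pointwise_conv ::
  "('a::euclidean_space \<Rightarrow> real) \<Rightarrow> (nat \<Rightarrow> 'a \<Rightarrow> 'a measure) \<Rightarrow> ('a \<Rightarrow> 'a measure) \<Rightarrow> bool" where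
  "bdd_pointwise_conv g \<mu>s \<mu> \<longleftrightarrow>
     (SUP n. gnorm g (\<mu>s n)) < \<infinity> \<and>
     (\<forall>x. vague_conv (\<lambda>n. \<mu>s n x) (\<mu> x)) \<and>
     (\<forall>K. compact K \<longrightarrow>
        ((\<lambda>R::real. SUP n. SUP x\<in>K. emeasure (\<mu>s n x) {y. norm y > R}) \<longlongrightarrow> 0) at_top)"

end

theory Submission
  imports Defs
begin

text \<open>Measurability of the limit kernel is measurability of a pointwise limit. The g-norm
  and the tail masses are integrals of functions h \<ge> 0 (g, and the indicator of {|y| > R})
  which on R^d minus the origin are pointwise limits of C_c functions 0 \<le> f_k \<le> h, namely h
  times a piecewise linear radial cutoff. For each k, vague convergence gives
  \<integral> f_k d\<mu>(x) = lim_n \<integral> f_k d\<mu>_n(x) \<le> sup_n \<integral> h d\<mu>_n(x), and Fatou's lemma passes this bound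
  from the f_k to h, so the uniform bounds on the \<mu>_n are inherited by \<mu>.\<close>

lemma AE_nonzero_Mplus:
  assumes "Mplus M"
  shows "AE y in M. y \<noteq> 0"
  using assms by (intro AE_I'[of "{0}"]) (auto simp: Mplus_def null_sets_def)

lemma Cc0_borel_measurable:
  assumes "Mplus M" and "Cc0 f"
  shows "f \<in> borel_measurable M"
proof -
  have "sets M = sets borel" using assms(1) by (simp add: Mplus_def)
  then show ?thesis
    using assms(2) borel_measurable_continuous_onI measurable_cong_sets
    unfolding Cc0_def by blast
qed

lemma Cc0_integrable:
  assumes M: "Mplus M" and f: "Cc0 f"
  shows "integrable M f"
proof -
  obtain K where K: "compact K" "K \<subseteq> - {0}" and zero: "\<And>y. y \<notin> K \<Longrightarrow> f y = 0"
    and cont: "continuous_on UNIV f"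
    using f unfolding Cc0_def by auto
  have "K \<in> sets M" using K(1) M by (simp add: Mplus_def borel_compact)
  moreover have "emeasure M K < \<infinity>" using M K unfolding Mplus_def by auto
  moreover obtain B where "\<And>y. y \<in> K \<Longrightarrow> norm (f y) \<le> B"
    using compact_imp_bounded[OF compact_continuous_image[OF continuous_on_subset[OF cont] K(1)]]
    by (auto simp: bounded_iff)
  ultimately show ?thesis
    using Cc0_borel_measurable[OF M f] zero
    by (intro integrableI_bounded_set[of K _ _ B]) (auto intro!: AE_I2)
qed

lemma nn_integral_le_of_vague_conv:
  fixes h :: "'a::euclidean_space \<Rightarrow> ennreal"
  assumes vc: "vague_conv Ms M" and M: "Mplus M" and Ms: "\<And>n. Mplus (Ms n)"
    and f: "\<And>k. Cc0 (f k)" and f_nonneg: "\<And>k y. 0 \<le> f k y"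
    and f_le: "\<And>k y. ennreal (f k y) \<le> h y"
    and f_lim: "\<And>y. y \<noteq> 0 \<Longrightarrow> (\<lambda>k. ennreal (f k y)) \<longlonglongrightarrow> h y"
    and bound: "\<And>n. integral\<^sup>N (Ms n) h \<le> C"
  shows "integral\<^sup>N M h \<le> C"
proof -
  have nn_integral_f: "(\<integral>\<^sup>+ y. f k y \<partial>N) = ennreal (integral\<^sup>L N (f k))" if "Mplus N" for N k
    using Cc0_integrable[OF that f] f_nonneg by (intro nn_integral_eq_integral) auto
  have f_bound: "(\<integral>\<^sup>+ y. f k y \<partial>M) \<le> C" for k
  proof (rule LIMSEQ_le_const2)
    show "(\<lambda>n. \<integral>\<^sup>+ y. f k y \<partial>Ms n) \<longlonglongrightarrow> (\<integral>\<^sup>+ y. f k y \<partial>M)"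
      using vc f unfolding vague_conv_def nn_integral_f[OF Ms] nn_integral_f[OF M] by auto
    show "\<exists>N. \<forall>n\<ge>N. (\<integral>\<^sup>+ y. f k y \<partial>Ms n) \<le> C"
      using order_trans[OF nn_integral_mono[OF f_le[of k]] bound] by blast
  qed
  have "integral\<^sup>N M h \<le> (\<integral>\<^sup>+ y. liminf (\<lambda>k. ennreal (f k y)) \<partial>M)"
    using AE_nonzero_Mplus[OF M]
    by (intro nn_integral_mono_AE)
      (auto elim!: eventually_mono simp: lim_imp_Liminf[OF trivial_limit_sequentially f_lim])
  also have "\<dots> \<le> liminf (\<lambda>k. \<integral>\<^sup>+ y. f k y \<partial>M)"
    using Cc0_borel_measurable[OF M f] by (intro nn_integral_liminf) simp
  also have "\<dots> \<le> C"
    using f_bound by (intro Liminf_le) auto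
  finally show ?thesis .
qed

definition cutoff :: "real \<Rightarrow> nat \<Rightarrow> real \<Rightarrow> real" where
  "cutoff R k t = max 0 (min 1 (min (real (Suc k) * (t - R) - 1) (real (Suc k) - t)))"

lemma cutoff_bounds: "0 \<le> cutoff R k t" "cutoff R k t \<le> 1"
  unfolding cutoff_def by auto

lemma cutoff_eq_0:
  assumes "real (Suc k) * (t - R) \<le> 1 \<or> real (Suc k) \<le> t"
  shows "cutoff R k t = 0"
  using assms unfolding cutoff_def by auto

lemma eventually_cutoff_eq_1:
  assumes "R < t"
  shows "eventually (\<lambda>k. cutoff R k t = 1) sequentially"
proof -
  have "eventually (\<lambda>k. max (2 / (t - R)) (t + 1) \<le> real k) sequentially"
    using filterlim_real_sequentially unfolding filterlim_at_top by blast
  then show ?thesis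
  proof eventually_elim
    case (elim k)
    then have "2 \<le> real k * (t - R)" using assms by (simp add: pos_divide_le_eq)
    then have "2 \<le> real (Suc k) * (t - R)" using assms by (simp add: distrib_right)
    then show ?case using elim unfolding cutoff_def by auto
  qed
qed

lemma Cc0_mult_cutoff:
  fixes w :: "'a::euclidean_space \<Rightarrow> real"
  assumes w: "continuous_on (- {0}) w" and R: "0 \<le> R"
  shows "Cc0 (\<lambda>y. w y * cutoff R k (norm y))"
  unfolding Cc0_def
proof (intro conjI exI)
  let ?a = "R + 1 / real (Suc k)"
  let ?K = "{y::'a. ?a \<le> norm y \<and> norm y \<le> real (Suc k)}"
  have small: "cutoff R k (norm y) = 0" if "norm y < ?a" for y :: 'a
    using that by (intro cutoff_eq_0) (simp add: field_simps)
  have "bounded ?K" by (rule bounded_subset[of "cball 0 (real (Suc k))"]) auto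
  moreover have "closed ?K" by (intro closed_Collect_conj closed_Collect_le continuous_intros)
  ultimately show "compact ?K" by (simp add: compact_eq_bounded_closed)
  have "0 < ?a" using R by (simp add: add_nonneg_pos)
  then show "?K \<subseteq> - {0}" by auto
  show "\<forall>y. y \<notin> ?K \<longrightarrow> w y * cutoff R k (norm y) = 0"
    using small cutoff_eq_0 by (auto simp: not_le)
  have "continuous_on (- {0} \<union> ball 0 ?a) (\<lambda>y. w y * cutoff R k (norm y))"
  proof (rule continuous_on_open_Un)
    show "continuous_on (- {0}) (\<lambda>y. w y * cutoff R k (norm y))"
      unfolding cutoff_def by (intro continuous_intros w)
    show "continuous_on (ball 0 ?a) (\<lambda>y. w y * cutoff R k (norm y))"
      using small by (intro continuous_on_eq[OF continuous_on_const, of _ 0]) auto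
  qed auto
  moreover have "- {0} \<union> ball 0 ?a = UNIV" using \<open>0 < ?a\<close> by auto
  ultimately show "continuous_on UNIV (\<lambda>y. w y * cutoff R k (norm y))" by metis
qed

lemma nn_integral_tail_le_of_vague_conv:
  fixes w :: "'a::euclidean_space \<Rightarrow> real"
  assumes vc: "vague_conv Ms M" and M: "Mplus M" and Ms: "\<And>n. Mplus (Ms n)"
    and w: "continuous_on (- {0}) w" and w_nonneg: "\<And>y. y \<noteq> 0 \<Longrightarrow> 0 \<le> w y"
    and R: "0 \<le> R"
    and bound: "\<And>n. (\<integral>\<^sup>+ y. ennreal (w y) * indicator {y. R < norm y} y \<partial>Ms n) \<le> C"
  shows "(\<integral>\<^sup>+ y. ennreal (w y) * indicator {y. R < norm y} y \<partial>M) \<le> C"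
proof (rule nn_integral_le_of_vague_conv[OF vc M Ms, where f = "\<lambda>k y. w y * cutoff R k (norm y)"])
  have cutoff_outside: "cutoff R k (norm y) = 0" if "norm y \<le> R" for k and y :: 'a
  proof (rule cutoff_eq_0)
    have "real (Suc k) * (norm y - R) \<le> 0"
      using that by (intro mult_nonneg_nonpos) auto
    then show "real (Suc k) * (norm y - R) \<le> 1 \<or> real (Suc k) \<le> norm y" by simp
  qed
  show "Cc0 (\<lambda>y. w y * cutoff R k (norm y))" for k
    using w R by (rule Cc0_mult_cutoff)
  show "0 \<le> w y * cutoff R k (norm y)" for k y
    using w_nonneg[of y] cutoff_bounds[of R k "norm y"] cutoff_outside[of y k] R
    by (cases "y = 0") auto
  show "ennreal (w y * cutoff R k (norm y)) \<le> ennreal (w y) * indicator {y. R < norm y} y" for k y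
  proof (cases "R < norm y")
    case True
    then have "0 \<le> w y" using R by (intro w_nonneg) auto
    then have "w y * cutoff R k (norm y) \<le> w y"
      using cutoff_bounds[of R k "norm y"] by (simp add: mult_left_le)
    with True show ?thesis by (simp add: ennreal_leI)
  qed (simp add: cutoff_outside)
  show "(\<lambda>k. ennreal (w y * cutoff R k (norm y))) \<longlonglongrightarrow> ennreal (w y) * indicator {y. R < norm y} y"
    for y
  proof (cases "R < norm y")
    case True
    then show ?thesis
      by (intro tendsto_eventually) (auto elim: eventually_mono[OF eventually_cutoff_eq_1])
  qed (simp add: cutoff_outside)
qed (fact bound)

lemma emeasure_tail_le_of_vague_conv:
  fixes M :: "'a::euclidean_space measure"
  assumes "vague_conv Ms M" and M: "Mplus M" and Ms: "\<And>n. Mplus (Ms n)" and "0 \<le> R"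
  shows "emeasure M {y. R < norm y} \<le> (SUP n. emeasure (Ms n) {y. R < norm y})"
proof -
  have tail: "emeasure N {y. R < norm y} = (\<integral>\<^sup>+ y. ennreal 1 * indicator {y. R < norm y} y \<partial>N)"
    if "Mplus N" for N :: "'a measure"
    using that unfolding Mplus_def by (simp add: borel_open open_Collect_less)
  show ?thesis
    unfolding tail[OF M]
  proof (rule nn_integral_tail_le_of_vague_conv[OF assms(1) M Ms, where w = "\<lambda>_. 1"])
    show "(\<integral>\<^sup>+ y. ennreal 1 * indicator {y. R < norm y} y \<partial>Ms n)
        \<le> (SUP n. emeasure (Ms n) {y. R < norm y})" for n
      unfolding tail[OF Ms, symmetric] by (rule SUP_upper) simp
  qed (use assms(4) in auto)
qed

lemma kernel_measurable_vague_limit: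
  assumes "\<And>n. kernel_measurable (\<mu>s n)" and "\<And>x. vague_conv (\<lambda>n. \<mu>s n x) (\<mu> x)"
  shows "kernel_measurable \<mu>"
  unfolding kernel_measurable_def
proof (intro allI impI)
  fix f :: "'a \<Rightarrow> real"
  assume "Cc0 f"
  show "(\<lambda>x. integral\<^sup>L (\<mu> x) f) \<in> borel_measurable borel"
  proof (rule borel_measurable_LIMSEQ_real)
    show "(\<lambda>n. integral\<^sup>L (\<mu>s n x) f) \<longlonglongrightarrow> integral\<^sup>L (\<mu> x) f" for x
      using assms(2) \<open>Cc0 f\<close> unfolding vague_conv_def by blast
    show "(\<lambda>x. integral\<^sup>L (\<mu>s n x) f) \<in> borel_measurable borel" for n
      using assms(1) \<open>Cc0 f\<close> unfolding kernel_measurable_def by blast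
  qed
qed

lemma gnorm_le_of_vague_conv:
  assumes g: "continuous_on (- {0}) g" and g_nonneg: "\<And>y. y \<noteq> 0 \<Longrightarrow> 0 \<le> g y"
    and vc: "\<And>x. vague_conv (\<lambda>n. \<mu>s n x) (\<mu> x)"
    and M: "\<And>x. Mplus (\<mu> x)" and Ms: "\<And>n x. Mplus (\<mu>s n x)"
  shows "gnorm g \<mu> \<le> (SUP n. gnorm g (\<mu>s n))"
proof -
  have punctured: "(\<integral>\<^sup>+ y. g y \<partial>N) = (\<integral>\<^sup>+ y. ennreal (g y) * indicator {y. 0 < norm y} y \<partial>N)"
    if "Mplus N" for N
    using AE_nonzero_Mplus[OF that] by (intro nn_integral_cong_AE) (auto elim!: eventually_mono)
  have "(\<integral>\<^sup>+ y. g y \<partial>\<mu>s n x) \<le> (SUP n. gnorm g (\<mu>s n))" for n x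
  proof -
    have "(\<integral>\<^sup>+ y. g y \<partial>\<mu>s n x) \<le> gnorm g (\<mu>s n)"
      unfolding gnorm_def by (rule SUP_upper) simp
    also have "\<dots> \<le> (SUP n. gnorm g (\<mu>s n))"
      by (rule SUP_upper) simp
    finally show ?thesis .
  qed
  then have "(\<integral>\<^sup>+ y. g y \<partial>\<mu> x) \<le> (SUP n. gnorm g (\<mu>s n))" for x
    unfolding punctured[OF M] punctured[OF Ms]
    by (intro nn_integral_tail_le_of_vague_conv[OF vc M Ms g g_nonneg order_refl])
  then show ?thesis
    unfolding gnorm_def by (rule SUP_least)
qed

lemma tight_on_compacts_vague_limit:
  assumes vc: "\<And>x. vague_conv (\<lambda>n. \<mu>s n x) (\<mu> x)"
    and M: "\<And>x. Mplus (\<mu> x)" and Ms: "\<And>n x. Mplus (\<mu>s n x)"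
    and tails: "\<And>K. compact K \<Longrightarrow>
      ((\<lambda>R::real. SUP n. SUP x\<in>K. emeasure (\<mu>s n x) {y. norm y > R}) \<longlongrightarrow> 0) at_top"
  shows "tight_on_compacts \<mu>"
  unfolding tight_on_compacts_def
proof (intro allI impI)
  fix K :: "'a set"
  assume K: "compact K"
  have tail_le: "(SUP x\<in>K. emeasure (\<mu> x) {y. norm y > R})
      \<le> (SUP n. SUP x\<in>K. emeasure (\<mu>s n x) {y. norm y > R})" if "0 \<le> R" for R
  proof -
    have "(SUP x\<in>K. emeasure (\<mu> x) {y. norm y > R})
        \<le> (SUP x\<in>K. SUP n. emeasure (\<mu>s n x) {y. norm y > R})"
      using emeasure_tail_le_of_vague_conv[OF vc M Ms that] by (intro SUP_mono) auto
    then show ?thesis by (simp add: SUP_commute[of _ K])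
  qed
  have "eventually (\<lambda>R. (SUP x\<in>K. emeasure (\<mu> x) {y. norm y > R})
      \<le> (SUP n. SUP x\<in>K. emeasure (\<mu>s n x) {y. norm y > R})) at_top"
    using eventually_ge_at_top[of "0::real"] by eventually_elim (rule tail_le)
  then show "((\<lambda>R. SUP x\<in>K. emeasure (\<mu> x) {y. norm y > R}) \<longlongrightarrow> 0) at_top"
    by (intro tendsto_sandwich[OF _ _ tendsto_const tails[OF K]]) auto
qed

theorem lemmaA4:
  fixes g :: "'a::euclidean_space \<Rightarrow> real"
    and \<mu>s :: "nat \<Rightarrow> 'a \<Rightarrow> 'a measure"
    and \<mu> :: "'a \<Rightarrow> 'a measure"
  assumes "continuous_on (- {0}) g"
    and "\<And>y. y \<noteq> 0 \<Longrightarrow> g y \<ge> 0"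
    and "\<And>n. \<mu>s n \<in> Kg g"
    and "\<And>x. Mplus (\<mu> x)"
    and "bdd_pointwise_conv g \<mu>s \<mu>"
  shows "\<mu> \<in> Kg g"
proof -
  have Ms: "\<And>n x. Mplus (\<mu>s n x)" and kernels: "\<And>n. kernel_measurable (\<mu>s n)"
    using assms(3) unfolding Kg_def by auto
  have bounded: "(SUP n. gnorm g (\<mu>s n)) < \<infinity>"
    and vc: "\<And>x. vague_conv (\<lambda>n. \<mu>s n x) (\<mu> x)"
    and tails: "\<And>K. compact K \<Longrightarrow>
      ((\<lambda>R::real. SUP n. SUP x\<in>K. emeasure (\<mu>s n x) {y. norm y > R}) \<longlongrightarrow> 0) at_top"
    using assms(5) unfolding bdd_pointwise_conv_def by auto
  have "kernel_measurable \<mu>"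
    using kernels vc by (rule kernel_measurable_vague_limit)
  moreover have "gnorm g \<mu> < \<infinity>"
    using gnorm_le_of_vague_conv[OF assms(1,2) vc assms(4) Ms] bounded by (rule le_less_trans)
  moreover have "tight_on_compacts \<mu>"
    using vc assms(4) Ms tails by (rule tight_on_compacts_vague_limit)
  ultimately show ?thesis
    unfolding Kg_def using assms(4) by auto
qed

end
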